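(* Let $S^1=\mathbb{R}/2\pi\mathbb{Z}$ with coordinate $\theta$, let $T>0$, and let $u:[0,T]\times S^1\to\mathbb{R}$ be a smooth solution of the Camassa-Holm equation (with the coefficients below) $$\partial_t u-\tfrac14\partial_{t\theta\theta}u+3\,\partial_\theta u\,u-\tfrac12\,\partial_{\theta\theta}u\,\partial_\theta u-\tfrac14\,\partial_{\theta\theta\theta}u\,u=0 .$$ Identify $S^1\times(0,\infty)$ with $\mathbb{R}^2\setminus\{0\}$ via polar coordinates $(\theta,r)\mapsto re^{i\theta}$, and define the time-dependent vector field $v$ on $\mathbb{R}^2\setminus\{0\}$ by $$v(t,\theta,r)=u(t,\theta)\,\partial_\theta+\tfrac{r}{2}\,\partial_\theta u(t,\theta)\,\partial_r .$$ Then there exists a smooth function $P:[0,T]\times(\mathbb{R}^2\setminus\{0\})\to\mathbb{R}$ (of the form $P(t,\theta,r)=\tfrac12 r^2p(t,\theta)$ for some smooth $p$) such that $v$ solves the incompressible Euler equation on $\mathbb{R}^2\setminus\{0\}$ with respect to the density $\rho=r^{-4}\,\mathrm{Leb}$: $$\partial_t v+\nabla_v v=-\nabla P,\qquad \nabla\cdot(\rho v)=0,$$ where $\nabla$, $\nabla_v v$ and $\nabla\cdot$ refer to the Euclidean structure of $\mathbb{R}^2$.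
   Context: $\mathrm{Leb}$ denotes Lebesgue measure on $\mathbb{R}^2$; in polar coordinates $r^{-4}\mathrm{Leb}=r^{-3}\,\mathrm{d}r\,\mathrm{d}\theta$. The components $u$ and $\tfrac r2\partial_\theta u$ are the components of $v$ in the coordinate frame $(\partial_\theta,\partial_r)$ of polar coordinates. *)

theory Defs
  imports "HOL-Analysis.Analysis"
begin

text \<open>C-infinity smoothness of a real-valued function on a subset S of a Euclidean
  space (derivatives taken within S, so that one-sided derivatives at the boundary
  of a closed time interval are allowed): f is differentiable within S and every
  partial derivative is again smooth on S.\<close>
coinductive smooth_on :: "'a::euclidean_space set \<Rightarrow> ('a \<Rightarrow> real) \<Rightarrow> bool" where
  "\<lbrakk>\<forall>x\<in>S. (f has_derivative f' x) (at x within S);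
    \<forall>b\<in>Basis. smooth_on S (\<lambda>x. f' x b)\<rbrakk> \<Longrightarrow> smooth_on S f"

definition dd :: "'a::real_normed_vector set \<Rightarrow> 'a \<Rightarrow> ('a \<Rightarrow> 'b::real_normed_vector) \<Rightarrow> 'a \<Rightarrow> 'b" where
  "dd S v f x = frechet_derivative f (at x within S) v"

text \<open>Domain of u: [0,T] x R (theta is the lifted angle coordinate), as uncurried function.\<close>
definition udom :: "real \<Rightarrow> (real \<times> real) set" where
  "udom T = {0..T} \<times> UNIV"

text \<open>Space-time domain of v: [0,T] x (R^2 - {0}), with R^2 identified with the complex plane.\<close>
definition vdom :: "real \<Rightarrow> (real \<times> complex) set" where
  "vdom T = {0..T} \<times> (UNIV - {0})"

text \<open>The vector field v = u d_theta + (r/2) (d_theta u) d_r written in Euclidean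
  coordinates: at z = r e^(i theta), d_theta = i z and d_r = z / r.\<close>
definition vfield :: "real \<Rightarrow> (real \<Rightarrow> real \<Rightarrow> real) \<Rightarrow> real \<times> complex \<Rightarrow> complex" where
  "vfield T u = (\<lambda>(t, z).
     let \<theta> = Arg z; r = cmod z; u\<theta> = dd (udom T) (0, 1) (\<lambda>(s, \<phi>). u s \<phi>) (t, \<theta>)
     in of_real (u t \<theta>) * (\<i> * z) + of_real (r / 2 * u\<theta>) * (z / of_real r))"

definition grad_x :: "real \<Rightarrow> (real \<times> complex \<Rightarrow> real) \<Rightarrow> real \<times> complex \<Rightarrow> complex" where
  "grad_x T P x = (\<Sum>b\<in>Basis. dd (vdom T) (0, b) P x *\<^sub>R b)"

definition div_x :: "real \<Rightarrow> (real \<times> complex \<Rightarrow> complex) \<Rightarrow> real \<times> complex \<Rightarrow> real" where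
  "div_x T W x = (\<Sum>b\<in>Basis. dd (vdom T) (0, b) W x \<bullet> b)"

end

theory Submission
  imports Defs
begin

text \<open>In polar coordinates the field \<open>v = u \<partial>\<^sub>\<theta> + (u\<^sub>\<theta>/2) r \<partial>\<^sub>r\<close> has the form
  \<open>a \<partial>\<^sub>\<theta> + b r \<partial>\<^sub>r\<close> with \<open>a, b\<close> depending on \<open>(t, \<theta>)\<close> only. For such fields the Euclidean
  material derivative is \<open>z (\<i> (a\<^sub>t + a a\<^sub>\<theta> + 2 a b) + (b\<^sub>t + a b\<^sub>\<theta> + b\<^sup>2 - a\<^sup>2))\<close> and the
  gradient of \<open>r\<^sup>2 p / 2\<close> is \<open>z (p + \<i> p\<^sub>\<theta> / 2)\<close>. Hence Euler's equation holds with
  \<open>p = a\<^sup>2 - b\<^sub>t - a b\<^sub>\<theta> - b\<^sup>2\<close> as soon as \<open>p\<^sub>\<theta> = -2 (a\<^sub>t + a a\<^sub>\<theta> + 2 a b)\<close>, and for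
  \<open>a = u\<close>, \<open>b = u\<^sub>\<theta>/2\<close> this condition is the Camassa-Holm equation, once the mixed partials
  \<open>\<partial>\<^sub>\<theta>\<partial>\<^sub>t\<close> and \<open>\<partial>\<^sub>t\<partial>\<^sub>\<theta>\<close> are known to agree. Similarly
  \<open>div (r\<^sup>-\<^sup>4 (a \<partial>\<^sub>\<theta> + b r \<partial>\<^sub>r)) = r\<^sup>-\<^sup>4 (a\<^sub>\<theta> - 2 b)\<close>, which vanishes for \<open>b = u\<^sub>\<theta>/2\<close>.
  Smoothness of all lifted quantities follows by coinduction over the algebra generated by the
  smooth functions and the lifts.\<close>

section \<open>Smoothness through algebras of functions\<close>

inductive_set fun_algebra :: "('a \<Rightarrow> real) set \<Rightarrow> ('a \<Rightarrow> real) set" for G where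
  generator: "g \<in> G \<Longrightarrow> g \<in> fun_algebra G"
| const: "(\<lambda>x. c) \<in> fun_algebra G"
| add: "f \<in> fun_algebra G \<Longrightarrow> g \<in> fun_algebra G \<Longrightarrow> (\<lambda>x. f x + g x) \<in> fun_algebra G"
| mult: "f \<in> fun_algebra G \<Longrightarrow> g \<in> fun_algebra G \<Longrightarrow> (\<lambda>x. f x * g x) \<in> fun_algebra G"

definition partials_in :: "'a::euclidean_space set \<Rightarrow> ('a \<Rightarrow> real) set \<Rightarrow> ('a \<Rightarrow> real) \<Rightarrow> bool" where
  "partials_in S A f \<longleftrightarrow> (\<exists>f'. (\<forall>x\<in>S. (f has_derivative f' x) (at x within S))
      \<and> (\<forall>b\<in>Basis. \<exists>g\<in>A. \<forall>x\<in>S. f' x b = g x))"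

lemma partials_inI:
  assumes "\<And>x. x \<in> S \<Longrightarrow> (f has_derivative f' x) (at x within S)"
    and "\<And>b. b \<in> Basis \<Longrightarrow> \<exists>g\<in>A. \<forall>x\<in>S. f' x b = g x"
  shows "partials_in S A f"
  using assms unfolding partials_in_def by blast

lemma partials_in_mono: "partials_in S A f \<Longrightarrow> A \<subseteq> B \<Longrightarrow> partials_in S B f"
  unfolding partials_in_def by blast

lemma smooth_on_cong:
  assumes "smooth_on S g" and "\<And>x. x \<in> S \<Longrightarrow> f x = g x"
  shows "smooth_on S f"
  using assms
proof (coinduction arbitrary: f g)
  case (smooth_on f g)
  from \<open>smooth_on S g\<close> obtain g' where g': "\<forall>x\<in>S. (g has_derivative g' x) (at x within S)"
    "\<forall>b\<in>Basis. smooth_on S (\<lambda>x. g' x b)" by (cases rule: smooth_on.cases) auto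
  have "\<forall>x\<in>S. (f has_derivative g' x) (at x within S)"
    using g'(1) smooth_on(2) by (metis has_derivative_transform_within zero_less_one)
  with g'(2) show ?case by blast
qed

lemma smooth_on_partials_in: "smooth_on S f \<Longrightarrow> partials_in S {g. smooth_on S g} f"
  by (erule smooth_on.cases) (auto simp: partials_in_def)

lemma smooth_on_continuous_on: "smooth_on S f \<Longrightarrow> continuous_on S f"
  by (erule smooth_on.cases)
     (auto simp: continuous_on_eq_continuous_within intro: has_derivative_continuous)

lemma partials_in_fun_algebra:
  assumes G: "\<forall>g\<in>G. partials_in S (fun_algebra G) g" and f: "f \<in> fun_algebra G"
  shows "partials_in S (fun_algebra G) f"
  using f
proof induction
  case (generator g)
  then show ?case using G by blast
next
  case (const c)
  show ?case by (rule partials_inI[where f'="\<lambda>x h. 0"]) (auto intro: fun_algebra.const)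
next
  case (add f g)
  from add.IH obtain f' g' where
    f': "\<forall>x\<in>S. (f has_derivative f' x) (at x within S)" "\<forall>b\<in>Basis. \<exists>h\<in>fun_algebra G. \<forall>x\<in>S. f' x b = h x" and
    g': "\<forall>x\<in>S. (g has_derivative g' x) (at x within S)" "\<forall>b\<in>Basis. \<exists>h\<in>fun_algebra G. \<forall>x\<in>S. g' x b = h x"
    unfolding partials_in_def by blast
  show ?case
  proof (rule partials_inI[where f'="\<lambda>x h. f' x h + g' x h"])
    fix b :: 'a assume "b \<in> Basis"
    with f'(2) g'(2) obtain hf hg where "hf \<in> fun_algebra G" "hg \<in> fun_algebra G"
      "\<forall>x\<in>S. f' x b = hf x" "\<forall>x\<in>S. g' x b = hg x" by meson
    then show "\<exists>h\<in>fun_algebra G. \<forall>x\<in>S. f' x b + g' x b = h x"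
      by (intro bexI[of _ "\<lambda>x. hf x + hg x"] fun_algebra.add) auto
  qed (use f'(1) g'(1) has_derivative_add in blast)
next
  case (mult f g)
  from mult.IH obtain f' g' where
    f': "\<forall>x\<in>S. (f has_derivative f' x) (at x within S)" "\<forall>b\<in>Basis. \<exists>h\<in>fun_algebra G. \<forall>x\<in>S. f' x b = h x" and
    g': "\<forall>x\<in>S. (g has_derivative g' x) (at x within S)" "\<forall>b\<in>Basis. \<exists>h\<in>fun_algebra G. \<forall>x\<in>S. g' x b = h x"
    unfolding partials_in_def by blast
  show ?case
  proof (rule partials_inI[where f'="\<lambda>x h. f x * g' x h + f' x h * g x"])
    fix b :: 'a assume "b \<in> Basis"
    with f'(2) g'(2) obtain hf hg where "hf \<in> fun_algebra G" "hg \<in> fun_algebra G"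
      "\<forall>x\<in>S. f' x b = hf x" "\<forall>x\<in>S. g' x b = hg x" by meson
    then show "\<exists>h\<in>fun_algebra G. \<forall>x\<in>S. f x * g' x b + f' x b * g x = h x"
      using mult.hyps
      by (intro bexI[of _ "\<lambda>x. f x * hg x + hf x * g x"] fun_algebra.add fun_algebra.mult) auto
  qed (use f'(1) g'(1) has_derivative_mult in blast)
qed

lemma smooth_on_if_partials_in:
  assumes A: "\<forall>g\<in>A. partials_in S A g" and f: "f \<in> A"
  shows "smooth_on S f"
proof -
  have "\<exists>g\<in>A. \<forall>x\<in>S. f x = g x" using f by blast
  then show ?thesis
  proof (coinduction arbitrary: f)
    case (smooth_on f)
    then obtain g where g: "g \<in> A" "\<forall>x\<in>S. f x = g x" by blast
    with A obtain g' where g': "\<forall>x\<in>S. (g has_derivative g' x) (at x within S)"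
      "\<forall>b\<in>Basis. \<exists>h\<in>A. \<forall>x\<in>S. g' x b = h x" unfolding partials_in_def by blast
    have "\<forall>x\<in>S. (f has_derivative g' x) (at x within S)"
      using g'(1) g(2) by (metis has_derivative_transform_within zero_less_one)
    with g'(2) show ?case by (intro exI[of _ S] exI[of _ f] exI[of _ g']) blast
  qed
qed

lemma smooth_on_fun_algebra:
  assumes G: "\<forall>g\<in>G. partials_in S (fun_algebra (G \<union> {g. smooth_on S g})) g"
    and f: "f \<in> fun_algebra (G \<union> {g. smooth_on S g})"
  shows "smooth_on S f"
proof -
  let ?A = "fun_algebra (G \<union> {g. smooth_on S g})"
  have "partials_in S ?A g" if "g \<in> G \<union> {g. smooth_on S g}" for g
  proof (cases "g \<in> G")
    case False
    with that have "partials_in S {g. smooth_on S g} g" by (simp add: smooth_on_partials_in)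
    then show ?thesis by (rule partials_in_mono) (auto intro: fun_algebra.generator)
  qed (use G in blast)
  then have "partials_in S ?A h" if "h \<in> ?A" for h
    using that by (intro partials_in_fun_algebra) auto
  then show ?thesis using f by (intro smooth_on_if_partials_in[of ?A]) auto
qed

lemma smooth_on_generated:
  assumes "\<forall>g\<in>G. partials_in S (fun_algebra (G \<union> {g. smooth_on S g})) g" and "g \<in> G"
  shows "smooth_on S g"
  using assms by (blast intro: smooth_on_fun_algebra fun_algebra.generator)

lemma smooth_on_const: "smooth_on S (\<lambda>x. c)"
  by (rule smooth_on_fun_algebra[of "{}"]) (auto intro: fun_algebra.const)

lemma smooth_on_add: "smooth_on S f \<Longrightarrow> smooth_on S g \<Longrightarrow> smooth_on S (\<lambda>x. f x + g x)"
  by (rule smooth_on_fun_algebra[of "{}"]) (auto intro: fun_algebra.add fun_algebra.generator)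

lemma smooth_on_mult: "smooth_on S f \<Longrightarrow> smooth_on S g \<Longrightarrow> smooth_on S (\<lambda>x. f x * g x)"
  by (rule smooth_on_fun_algebra[of "{}"]) (auto intro: fun_algebra.mult fun_algebra.generator)

lemma smooth_on_bounded_linear: "bounded_linear f \<Longrightarrow> smooth_on S f"
  by (rule smooth_on.intros[where f'="\<lambda>x. f"])
     (auto intro: bounded_linear.has_derivative smooth_on_const)

section \<open>Partial derivatives on \<open>[0, T] \<times> \<real>\<close>\<close>

lemma interval_times_open_basis_steps:
  fixes U :: "'b::euclidean_space set" and a b t :: real
  assumes ab: "a < b" and t: "t \<in> {a..b}" and z: "z \<in> U" and U: "open U"
    and i: "i \<in> Basis" and e: "e > 0"
  shows "\<exists>d. 0 < \<bar>d\<bar> \<and> \<bar>d\<bar> < e \<and> (t, z) + d *\<^sub>R i \<in> {a..b} \<times> U"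
proof -
  from i consider "i = (1::real, 0)" | j where "j \<in> Basis" "i = (0, j)"
    unfolding Basis_prod_def by auto
  then show ?thesis
  proof cases
    case 1
    define m where "m = min (e / 2) ((b - a) / 2)"
    have m: "0 < m" "m < e" "m \<le> (b - a) / 2" using ab e unfolding m_def by (auto simp: min_def)
    show ?thesis
    proof (cases "t \<le> (a + b) / 2")
      case True
      then show ?thesis using m t 1 z by (intro exI[of _ m]) auto
    next
      case False
      then show ?thesis using m t 1 z by (intro exI[of _ "- m"]) auto
    qed
  next
    case 2
    obtain r where r: "r > 0" "ball z r \<subseteq> U" using U z open_contains_ball by blast
    define m where "m = min (e / 2) (r / 2)"
    have m: "0 < m" "m < e" "m < r" using r e by (auto simp: m_def)
    then have "z + m *\<^sub>R j \<in> ball z r" using 2 by (auto simp: dist_norm)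
    then show ?thesis using m t 2 r by (intro exI[of _ m]) auto
  qed
qed

lemma dd_eq_derivative:
  fixes U :: "'b::euclidean_space set" and a b :: real and f :: "real \<times> 'b \<Rightarrow> 'c::real_normed_vector"
  assumes f: "(f has_derivative f') (at x within {a..b} \<times> U)"
    and "a < b" "x \<in> {a..b} \<times> U" "open U"
  shows "dd ({a..b} \<times> U) v f x = f' v"
proof -
  have "(f has_derivative frechet_derivative f (at x within {a..b} \<times> U)) (at x within {a..b} \<times> U)"
    using f frechet_derivative_works differentiableI by blast
  then have "frechet_derivative f (at x within {a..b} \<times> U) = f'"
    using interval_times_open_basis_steps[of a b "fst x" "snd x" U] assms
    by (intro frechet_derivative_unique_within[OF _ f]) auto
  then show ?thesis by (simp add: dd_def)
qed

lemma dd_cong: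
  assumes "\<And>y. y \<in> S \<Longrightarrow> f y = g y" and "x \<in> S"
  shows "dd S v f x = dd S v g x"
proof -
  have "(f has_derivative D) (at x within S) \<longleftrightarrow> (g has_derivative D) (at x within S)" for D
    using assms by (metis has_derivative_transform_within zero_less_one)
  then show ?thesis by (simp add: dd_def frechet_derivative_def)
qed

lemma dd_udom:
  "(f has_derivative f') (at x within udom T) \<Longrightarrow> T > 0 \<Longrightarrow> x \<in> udom T \<Longrightarrow> dd (udom T) v f x = f' v"
  unfolding udom_def by (rule dd_eq_derivative) auto

lemma dd_vdom:
  "(f has_derivative f') (at x within vdom T) \<Longrightarrow> T > 0 \<Longrightarrow> x \<in> vdom T \<Longrightarrow> dd (vdom T) v f x = f' v"
  unfolding vdom_def by (rule dd_eq_derivative) auto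

lemma div_x_cong:
  assumes "\<And>y. y \<in> vdom T \<Longrightarrow> W y = W' y" and "x \<in> vdom T"
  shows "div_x T W x = div_x T W' x"
  unfolding div_x_def using dd_cong[OF assms] by simp

abbreviation partial_t :: "real \<Rightarrow> (real \<times> real \<Rightarrow> real) \<Rightarrow> real \<times> real \<Rightarrow> real" where
  "partial_t T g \<equiv> dd (udom T) (1, 0) g"

abbreviation partial_theta :: "real \<Rightarrow> (real \<times> real \<Rightarrow> real) \<Rightarrow> real \<times> real \<Rightarrow> real" where
  "partial_theta T g \<equiv> dd (udom T) (0, 1) g"

lemma has_derivative_udom:
  assumes T: "T > 0" and g: "smooth_on (udom T) g" and x: "x \<in> udom T"
  shows "(g has_derivative (\<lambda>h. fst h * partial_t T g x + snd h * partial_theta T g x)) (at x within udom T)"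
proof -
  from g obtain g' where g': "\<forall>y\<in>udom T. (g has_derivative g' y) (at y within udom T)"
    by (cases rule: smooth_on.cases) auto
  then interpret bounded_linear "g' x" using x by (blast intro: has_derivative_bounded_linear)
  have "g' x h = fst h * g' x (1, 0) + snd h * g' x (0, 1)" for h
    using add[of "(fst h, 0)" "(0, snd h)"] scale[of "fst h" "(1, 0)"] scale[of "snd h" "(0, 1)"]
    by simp
  moreover have "dd (udom T) v g x = g' x v" for v using dd_udom g' T x by blast
  ultimately show ?thesis using g' x by (metis (no_types, lifting) ext)
qed

lemma smooth_on_dd_udom:
  assumes T: "T > 0" and g: "smooth_on (udom T) g" and b: "b \<in> Basis"
  shows "smooth_on (udom T) (dd (udom T) b g)"
proof -
  from g obtain g' where g': "\<forall>y\<in>udom T. (g has_derivative g' y) (at y within udom T)"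
      "\<forall>b\<in>Basis. smooth_on (udom T) (\<lambda>y. g' y b)" by (cases rule: smooth_on.cases) auto
  show ?thesis
  proof (rule smooth_on_cong)
    show "smooth_on (udom T) (\<lambda>y. g' y b)" using g'(2) b by blast
    show "dd (udom T) b g y = g' y b" if "y \<in> udom T" for y
      using dd_udom[OF _ T that] g'(1) that by blast
  qed
qed

lemma smooth_on_partial_t: "T > 0 \<Longrightarrow> smooth_on (udom T) g \<Longrightarrow> smooth_on (udom T) (partial_t T g)"
  and smooth_on_partial_theta: "T > 0 \<Longrightarrow> smooth_on (udom T) g \<Longrightarrow> smooth_on (udom T) (partial_theta T g)"
  by (auto intro: smooth_on_dd_udom simp: Basis_prod_def)

lemma dd_udom_divide_const:
  assumes T: "T > 0" and f: "smooth_on (udom T) f" and y: "y \<in> udom T"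
  shows "dd (udom T) v (\<lambda>y. f y / c) y = dd (udom T) v f y / c"
proof -
  have "((\<lambda>y. f y / c) has_derivative
      (\<lambda>h. (fst h * partial_t T f y + snd h * partial_theta T f y) / c)) (at y within udom T)"
    using has_derivative_mult_left[OF has_derivative_udom[OF T f y], of "inverse c"]
    by (simp add: divide_inverse)
  from dd_udom[OF this T y, of v] dd_udom[OF has_derivative_udom[OF T f y] T y, of v] show ?thesis
    by (simp add: add_divide_distrib)
qed

definition periodic_smooth :: "real \<Rightarrow> (real \<times> real \<Rightarrow> real) set" where
  "periodic_smooth T =
     {g. smooth_on (udom T) g \<and> (\<forall>t\<in>{0..T}. \<forall>\<theta>. g (t, \<theta> + 2 * pi) = g (t, \<theta>))}"

lemma periodic_smoothD:
  assumes "g \<in> periodic_smooth T"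
  shows "smooth_on (udom T) g" and "t \<in> {0..T} \<Longrightarrow> g (t, \<theta> + 2 * pi) = g (t, \<theta>)"
  using assms by (auto simp: periodic_smooth_def)

lemma dd_udom_periodic:
  assumes T: "T > 0" and g: "g \<in> periodic_smooth T" and t: "t \<in> {0..T}"
  shows "dd (udom T) v g (t, \<theta> + 2 * pi) = dd (udom T) v g (t, \<theta>)"
proof -
  let ?shift = "\<lambda>y::real \<times> real. y + (0, 2 * pi)"
  let ?G = "\<lambda>h. fst h * partial_t T g (t, \<theta> + 2 * pi) + snd h * partial_theta T g (t, \<theta> + 2 * pi)"
  have x: "(t, \<theta>) \<in> udom T" "(t, \<theta> + 2 * pi) \<in> udom T" using t by (auto simp: udom_def)
  have G: "(g has_derivative ?G) (at (t, \<theta> + 2 * pi) within udom T)"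
    using has_derivative_udom[OF T periodic_smoothD(1)[OF g] x(2)] .
  have "(?shift has_derivative id) (at (t, \<theta>) within udom T)"
    unfolding id_def by (rule has_derivative_add_const[OF has_derivative_ident])
  moreover have "(g has_derivative ?G) (at (?shift (t, \<theta>)) within ?shift ` udom T)"
  proof -
    have "?shift ` udom T \<subseteq> udom T" by (auto simp: udom_def)
    from has_derivative_subset[OF G this] show ?thesis by simp
  qed
  ultimately have "((g \<circ> ?shift) has_derivative ?G \<circ> id) (at (t, \<theta>) within udom T)"
    by (rule diff_chain_within)
  then have "((g \<circ> ?shift) has_derivative ?G) (at (t, \<theta>) within udom T)" by simp
  then have "(g has_derivative ?G) (at (t, \<theta>) within udom T)"
  proof (rule has_derivative_transform_within[OF _ zero_less_one x(1)])
    show "(g \<circ> ?shift) y = g y" if "y \<in> udom T" "dist y (t, \<theta>) < 1" for y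
      using that periodic_smoothD(2)[OF g] by (cases y) (simp add: udom_def)
  qed
  then have "dd (udom T) v g (t, \<theta>) = ?G v" by (rule dd_udom[OF _ T x(1)])
  moreover have "dd (udom T) v g (t, \<theta> + 2 * pi) = ?G v" by (rule dd_udom[OF G T x(2)])
  ultimately show ?thesis by simp
qed

lemma periodic_smooth_partial_t: "T > 0 \<Longrightarrow> g \<in> periodic_smooth T \<Longrightarrow> partial_t T g \<in> periodic_smooth T"
  and periodic_smooth_partial_theta: "T > 0 \<Longrightarrow> g \<in> periodic_smooth T \<Longrightarrow> partial_theta T g \<in> periodic_smooth T"
  by (auto simp: periodic_smooth_def dd_udom_periodic smooth_on_partial_t smooth_on_partial_theta)

lemma periodic_smooth_const: "(\<lambda>y. c) \<in> periodic_smooth T"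
  and periodic_smooth_add: "f \<in> periodic_smooth T \<Longrightarrow> g \<in> periodic_smooth T \<Longrightarrow> (\<lambda>y. f y + g y) \<in> periodic_smooth T"
  and periodic_smooth_mult: "f \<in> periodic_smooth T \<Longrightarrow> g \<in> periodic_smooth T \<Longrightarrow> (\<lambda>y. f y * g y) \<in> periodic_smooth T"
  by (auto simp: periodic_smooth_def smooth_on_const smooth_on_add smooth_on_mult)

section \<open>Symmetry of mixed partial derivatives\<close>

lemma has_real_derivative_partial_t:
  assumes T: "T > 0" and g: "smooth_on (udom T) g" and I: "I \<subseteq> {0..T}" and s: "s \<in> I"
  shows "((\<lambda>s. g (s, \<theta>)) has_real_derivative partial_t T g (s, \<theta>)) (at s within I)"
proof -
  have dg: "(g has_derivative (\<lambda>h. fst h * partial_t T g (s, \<theta>) + snd h * partial_theta T g (s, \<theta>)))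
      (at (s, \<theta>) within (\<lambda>s. (s, \<theta>)) ` I)"
  proof (rule has_derivative_subset)
    show "(\<lambda>s. (s, \<theta>)) ` I \<subseteq> udom T" using I by (auto simp: udom_def)
    then show "(g has_derivative (\<lambda>h. fst h * partial_t T g (s, \<theta>) + snd h * partial_theta T g (s, \<theta>)))
      (at (s, \<theta>) within udom T)" using has_derivative_udom[OF T g] s by blast
  qed
  have "((\<lambda>s. (s, \<theta>)) has_derivative (\<lambda>d. (d, 0))) (at s within I)"
    by (auto intro!: derivative_eq_intros)
  from diff_chain_within[OF this dg]
  have "((\<lambda>s. g (s, \<theta>)) has_derivative (\<lambda>d. partial_t T g (s, \<theta>) * d)) (at s within I)"
    by (simp add: o_def mult.commute)
  then show ?thesis by (simp add: has_field_derivative_def)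
qed

lemma has_real_derivative_partial_theta:
  assumes T: "T > 0" and g: "smooth_on (udom T) g" and t: "t \<in> {0..T}"
  shows "((\<lambda>\<theta>. g (t, \<theta>)) has_real_derivative partial_theta T g (t, \<theta>)) (at \<theta> within J)"
proof -
  have dg: "(g has_derivative (\<lambda>h. fst h * partial_t T g (t, \<theta>) + snd h * partial_theta T g (t, \<theta>)))
      (at (t, \<theta>) within (\<lambda>\<theta>. (t, \<theta>)) ` J)"
  proof (rule has_derivative_subset)
    show "(\<lambda>\<theta>. (t, \<theta>)) ` J \<subseteq> udom T" using t by (auto simp: udom_def)
    show "(g has_derivative (\<lambda>h. fst h * partial_t T g (t, \<theta>) + snd h * partial_theta T g (t, \<theta>)))
      (at (t, \<theta>) within udom T)" using has_derivative_udom[OF T g] t by (simp add: udom_def)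
  qed
  have "((\<lambda>\<theta>. (t, \<theta>)) has_derivative (\<lambda>d. (0, d))) (at \<theta> within J)"
    by (auto intro!: derivative_eq_intros)
  from diff_chain_within[OF this dg]
  have "((\<lambda>\<theta>. g (t, \<theta>)) has_derivative (\<lambda>d. partial_theta T g (t, \<theta>) * d)) (at \<theta> within J)"
    by (simp add: o_def mult.commute)
  then show ?thesis by (simp add: has_field_derivative_def)
qed

lemma mvt_between:
  fixes f :: "real \<Rightarrow> real"
  assumes "\<And>s. s \<in> {min a b..max a b} \<Longrightarrow> (f has_real_derivative f' s) (at s within {min a b..max a b})"
  shows "\<exists>\<xi>\<in>{min a b..max a b}. f b - f a = (b - a) * f' \<xi>"
proof (cases "a \<le> b")
  case True
  then have "\<exists>\<xi>\<in>{a..b}. f b - f a = f' \<xi> * (b - a)"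
    using assms by (intro mvt_very_simple) (auto simp: has_field_derivative_def)
  then show ?thesis using True by (auto simp: mult.commute)
next
  case False
  then obtain \<xi> where "\<xi> \<in> {b..a}" "f a - f b = f' \<xi> * (a - b)"
    using assms mvt_very_simple[of b a f "\<lambda>s d. f' s * d"]
    by (auto simp: has_field_derivative_def min_def max_def)
  then show ?thesis using False by (intro bexI[of _ \<xi>]) (auto simp: algebra_simps)
qed

lemma second_difference_mvt:
  fixes F F\<^sub>1 F\<^sub>1\<^sub>2 :: "real \<Rightarrow> real \<Rightarrow> real" and a a' b b' :: real
  defines "I \<equiv> {min a a'..max a a'}" and "J \<equiv> {min b b'..max b b'}"
  assumes F\<^sub>1: "\<And>s r. s \<in> I \<Longrightarrow> r \<in> J \<Longrightarrow> ((\<lambda>s. F s r) has_real_derivative F\<^sub>1 s r) (at s within I)"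
    and F\<^sub>1\<^sub>2: "\<And>s r. s \<in> I \<Longrightarrow> r \<in> J \<Longrightarrow> ((\<lambda>r. F\<^sub>1 s r) has_real_derivative F\<^sub>1\<^sub>2 s r) (at r within J)"
  shows "\<exists>\<xi>\<in>I. \<exists>\<eta>\<in>J. F a' b' - F a' b - F a b' + F a b = (a' - a) * (b' - b) * F\<^sub>1\<^sub>2 \<xi> \<eta>"
proof -
  have b: "b \<in> J" "b' \<in> J" by (auto simp: J_def)
  have "((\<lambda>s. F s b' - F s b) has_real_derivative F\<^sub>1 s b' - F\<^sub>1 s b) (at s within I)" if "s \<in> I" for s
    using F\<^sub>1[OF that b(2)] F\<^sub>1[OF that b(1)] by (rule DERIV_diff)
  then obtain \<xi> where \<xi>: "\<xi> \<in> I" "(F a' b' - F a' b) - (F a b' - F a b) = (a' - a) * (F\<^sub>1 \<xi> b' - F\<^sub>1 \<xi> b)"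
    using mvt_between[of a a' "\<lambda>s. F s b' - F s b" "\<lambda>s. F\<^sub>1 s b' - F\<^sub>1 s b"] unfolding I_def by blast
  obtain \<eta> where "\<eta> \<in> J" "F\<^sub>1 \<xi> b' - F\<^sub>1 \<xi> b = (b' - b) * F\<^sub>1\<^sub>2 \<xi> \<eta>"
    using mvt_between[of b b' "F\<^sub>1 \<xi>" "F\<^sub>1\<^sub>2 \<xi>"] F\<^sub>1\<^sub>2 \<xi>(1) unfolding J_def by auto
  with \<xi> show ?thesis by (intro bexI) (auto simp: algebra_simps)
qed

lemma second_difference_partial_theta_partial_t:
  assumes T: "T > 0" and g: "smooth_on (udom T) g" and t: "t0 \<in> {0..T}" "t1 \<in> {0..T}"
  shows "\<exists>\<xi>\<in>{min t0 t1..max t0 t1}. \<exists>\<eta>\<in>{min \<theta>0 \<theta>1..max \<theta>0 \<theta>1}.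
    g (t1, \<theta>1) - g (t1, \<theta>0) - g (t0, \<theta>1) + g (t0, \<theta>0)
      = (t1 - t0) * (\<theta>1 - \<theta>0) * partial_theta T (partial_t T g) (\<xi>, \<eta>)"
proof (rule second_difference_mvt[where F="\<lambda>s r. g (s, r)" and F\<^sub>1="\<lambda>s r. partial_t T g (s, r)"])
  have I: "{min t0 t1..max t0 t1} \<subseteq> {0..T}" using t by auto
  show "((\<lambda>s. g (s, r)) has_real_derivative partial_t T g (s, r)) (at s within {min t0 t1..max t0 t1})"
    if "s \<in> {min t0 t1..max t0 t1}" for s r
    using has_real_derivative_partial_t[OF T g I that] .
  show "((\<lambda>r. partial_t T g (s, r)) has_real_derivative partial_theta T (partial_t T g) (s, r))
      (at r within {min \<theta>0 \<theta>1..max \<theta>0 \<theta>1})" if "s \<in> {min t0 t1..max t0 t1}" for s r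
    using I that by (intro has_real_derivative_partial_theta[OF T smooth_on_partial_t[OF T g]]) blast
qed

lemma second_difference_partial_t_partial_theta:
  assumes T: "T > 0" and g: "smooth_on (udom T) g" and t: "t0 \<in> {0..T}" "t1 \<in> {0..T}"
  shows "\<exists>\<xi>\<in>{min t0 t1..max t0 t1}. \<exists>\<eta>\<in>{min \<theta>0 \<theta>1..max \<theta>0 \<theta>1}.
    g (t1, \<theta>1) - g (t1, \<theta>0) - g (t0, \<theta>1) + g (t0, \<theta>0)
      = (t1 - t0) * (\<theta>1 - \<theta>0) * partial_t T (partial_theta T g) (\<xi>, \<eta>)"
proof -
  have I: "{min t0 t1..max t0 t1} \<subseteq> {0..T}" using t by auto
  have "\<exists>\<eta>\<in>{min \<theta>0 \<theta>1..max \<theta>0 \<theta>1}. \<exists>\<xi>\<in>{min t0 t1..max t0 t1}.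
      g (t1, \<theta>1) - g (t0, \<theta>1) - g (t1, \<theta>0) + g (t0, \<theta>0)
        = (\<theta>1 - \<theta>0) * (t1 - t0) * partial_t T (partial_theta T g) (\<xi>, \<eta>)"
  proof (rule second_difference_mvt[where F="\<lambda>r s. g (s, r)" and F\<^sub>1="\<lambda>r s. partial_theta T g (s, r)"])
    show "((\<lambda>r. g (s, r)) has_real_derivative partial_theta T g (s, r)) (at r within {min \<theta>0 \<theta>1..max \<theta>0 \<theta>1})"
      if "s \<in> {min t0 t1..max t0 t1}" for s r
      using I that by (intro has_real_derivative_partial_theta[OF T g]) blast
    show "((\<lambda>s. partial_theta T g (s, r)) has_real_derivative partial_t T (partial_theta T g) (s, r))
        (at s within {min t0 t1..max t0 t1})" if "s \<in> {min t0 t1..max t0 t1}" for s r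
      using has_real_derivative_partial_t[OF T smooth_on_partial_theta[OF T g] I that] .
  qed
  then show ?thesis by (auto simp: algebra_simps)
qed

text \<open>The same second difference, expanded by the mean value theorem in either order.\<close>
lemma mixed_partials_agree_nearby:
  assumes T: "T > 0" and g: "smooth_on (udom T) g" and x: "x \<in> udom T" and e: "e > 0"
  shows "\<exists>y\<in>udom T. \<exists>y'\<in>udom T. dist y x < e \<and> dist y' x < e \<and>
           partial_theta T (partial_t T g) y = partial_t T (partial_theta T g) y'"
proof -
  obtain t0 \<theta>0 where x0: "x = (t0, \<theta>0)" by (cases x)
  have t0: "t0 \<in> {0..T}" using x x0 by (auto simp: udom_def)
  obtain h where h: "0 < \<bar>h\<bar>" "\<bar>h\<bar> < e / 2" "t0 + h \<in> {0..T}"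
    using interval_times_open_basis_steps[OF T t0 UNIV_I open_UNIV, of "(1, 0)" "e / 2"] e
    by (auto simp: Basis_prod_def)
  define I where "I = {min t0 (t0 + h)..max t0 (t0 + h)}"
  define J where "J = {min \<theta>0 (\<theta>0 + h)..max \<theta>0 (\<theta>0 + h)}"
  have near: "(s, r) \<in> udom T \<and> dist (s, r) x < e" if "s \<in> I" "r \<in> J" for s r
  proof -
    have "dist (s, r) x \<le> \<bar>s - t0\<bar> + \<bar>r - \<theta>0\<bar>"
      using norm_Pair_le[of "s - t0" "r - \<theta>0"] by (simp add: x0 dist_norm)
    also have "\<dots> \<le> 2 * \<bar>h\<bar>" using that by (auto simp: I_def J_def)
    finally show ?thesis using h(2) t0 h(3) that(1) by (auto simp: udom_def I_def)
  qed
  let ?\<Delta> = "g (t0 + h, \<theta>0 + h) - g (t0 + h, \<theta>0) - g (t0, \<theta>0 + h) + g (t0, \<theta>0)"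
  obtain \<xi> \<eta> where \<xi>\<eta>: "\<xi> \<in> I" "\<eta> \<in> J" "?\<Delta> = h * h * partial_theta T (partial_t T g) (\<xi>, \<eta>)"
    using second_difference_partial_theta_partial_t[OF T g t0 h(3), of \<theta>0 "\<theta>0 + h"]
    unfolding I_def J_def by auto
  obtain \<xi>' \<eta>' where \<xi>\<eta>': "\<xi>' \<in> I" "\<eta>' \<in> J" "?\<Delta> = h * h * partial_t T (partial_theta T g) (\<xi>', \<eta>')"
    using second_difference_partial_t_partial_theta[OF T g t0 h(3), of \<theta>0 "\<theta>0 + h"]
    unfolding I_def J_def by auto
  have "h * h \<noteq> 0" using h(1) by simp
  then have "partial_theta T (partial_t T g) (\<xi>, \<eta>) = partial_t T (partial_theta T g) (\<xi>', \<eta>')"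
    using \<xi>\<eta>(3) \<xi>\<eta>'(3) by simp
  then show ?thesis using near \<xi>\<eta>(1,2) \<xi>\<eta>'(1,2) by blast
qed

lemma partial_t_partial_theta_commute:
  assumes T: "T > 0" and g: "smooth_on (udom T) g" and x: "x \<in> udom T"
  shows "partial_theta T (partial_t T g) x = partial_t T (partial_theta T g) x"
proof (rule ccontr)
  let ?A = "partial_theta T (partial_t T g)" and ?B = "partial_t T (partial_theta T g)"
  assume "?A x \<noteq> ?B x"
  define e where "e = \<bar>?A x - ?B x\<bar> / 2"
  have e: "e > 0" using \<open>?A x \<noteq> ?B x\<close> by (simp add: e_def)
  have "smooth_on (udom T) ?A" "smooth_on (udom T) ?B"
    using T g by (simp_all add: smooth_on_partial_t smooth_on_partial_theta)
  then have "continuous_on (udom T) ?A" "continuous_on (udom T) ?B"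
    by (simp_all add: smooth_on_continuous_on)
  then obtain dA dB where
    dA: "dA > 0" "\<forall>y\<in>udom T. dist y x < dA \<longrightarrow> dist (?A y) (?A x) < e" and
    dB: "dB > 0" "\<forall>y\<in>udom T. dist y x < dB \<longrightarrow> dist (?B y) (?B x) < e"
    using x e unfolding continuous_on_iff by blast
  obtain y y' where y: "y \<in> udom T" "y' \<in> udom T" "dist y x < min dA dB" "dist y' x < min dA dB"
    and "?A y = ?B y'"
    using mixed_partials_agree_nearby[OF T g x, of "min dA dB"] dA(1) dB(1) by auto
  have "dist (?A y) (?A x) < e" "dist (?B y') (?B x) < e" using dA(2) dB(2) y by auto
  with \<open>?A y = ?B y'\<close> have "\<bar>?A x - ?B x\<bar> < 2 * e" unfolding dist_real_def by arith
  then show False by (simp add: e_def)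
qed

section \<open>Lifting to the punctured plane\<close>

definition polar_lift :: "(real \<times> real \<Rightarrow> real) \<Rightarrow> real \<times> complex \<Rightarrow> real" where
  "polar_lift g x = g (fst x, Arg (snd x))"

definition polar_lift_deriv :: "real \<Rightarrow> (real \<times> real \<Rightarrow> real) \<Rightarrow> real \<times> complex \<Rightarrow> real \<times> complex \<Rightarrow> real" where
  "polar_lift_deriv T g x h =
     fst h * polar_lift (partial_t T g) x + Im (snd h / snd x) * polar_lift (partial_theta T g) x"

text \<open>\<open>Arg\<close> jumps across the negative real axis, but near any \<open>z \<noteq> 0\<close> it agrees up to
  \<open>2\<pi>\<close> with a smooth branch of the argument.\<close>
lemma Arg_branch:
  assumes z: "z \<noteq> 0"
  obtains s c where "s \<noteq> 0" "s * z \<notin> \<real>\<^sub>\<le>\<^sub>0" "Arg z = Im (Ln (s * z)) + c"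
    "\<And>w. w \<noteq> 0 \<Longrightarrow> Im (Ln (s * w)) + c = Arg w \<or> Im (Ln (s * w)) + c = Arg w + 2 * pi"
proof (cases "z \<in> \<real>\<^sub>\<le>\<^sub>0")
  case False
  show ?thesis by (rule that[of 1 0]) (use False z in \<open>auto simp: Arg_eq_Im_Ln\<close>)
next
  case True
  have "Arg z = pi" using True z by (auto simp: complex_nonpos_Reals_iff Arg_eq_pi complex_eq_iff)
  moreover have "- z \<notin> \<real>\<^sub>\<le>\<^sub>0" using True z by (auto simp: complex_nonpos_Reals_iff complex_eq_iff)
  moreover have "Im (Ln (- w)) + pi = Arg w \<or> Im (Ln (- w)) + pi = Arg w + 2 * pi" if "w \<noteq> 0" for w
    using that Arg_minus[OF that] by (auto simp: Arg_eq_Im_Ln[symmetric] split: if_splits)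
  moreover have "Im (Ln (- z)) = 0"
    using Arg_minus[OF z] \<open>Arg z = pi\<close> z pi_gt_zero by (simp add: Arg_eq_Im_Ln[symmetric])
  ultimately show ?thesis by (intro that[of "-1" pi]) auto
qed

lemma has_derivative_Im_Ln_mult:
  assumes "s \<noteq> 0" "s * z \<notin> \<real>\<^sub>\<le>\<^sub>0"
  shows "((\<lambda>w. Im (Ln (s * w))) has_derivative (\<lambda>h. Im (h / z))) (at z within S)"
proof -
  have "(Ln has_derivative (*) (inverse (s * z))) (at (s * z))"
    using has_field_derivative_Ln[OF assms(2)] by (simp add: has_field_derivative_def)
  then have "((\<lambda>w. Ln (s * w)) has_derivative (\<lambda>h. inverse (s * z) * (s * h))) (at z within S)"
    by (rule has_derivative_compose[OF has_derivative_mult_right[OF has_derivative_ident]])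
  then have "((\<lambda>w. Im (Ln (s * w))) has_derivative (\<lambda>h. Im (inverse (s * z) * (s * h)))) (at z within S)"
    by (rule has_derivative_Im)
  moreover have "inverse (s * z) * (s * h) = h / z" for h
    using assms(1) by (simp add: field_simps)
  ultimately show ?thesis by (simp only:)
qed

lemma has_derivative_branch_coordinates:
  assumes "s \<noteq> 0" "s * z \<notin> \<real>\<^sub>\<le>\<^sub>0"
  shows "((\<lambda>y. (fst y, Im (Ln (s * snd y)) + c)) has_derivative (\<lambda>h. (fst h, Im (snd h / z))))
    (at (t, z) within S)"
proof -
  have "((\<lambda>y. Im (Ln (s * snd y))) has_derivative (\<lambda>h. Im (snd h / z))) (at (t, z) within S)"
  proof (rule has_derivative_compose[of snd snd])
    show "(snd has_derivative snd) (at (t, z) within S)" by (rule has_derivative_snd[OF has_derivative_ident])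
    show "((\<lambda>w. Im (Ln (s * w))) has_derivative (\<lambda>h. Im (h / z))) (at (snd (t, z)))"
      using has_derivative_Im_Ln_mult[OF assms, of UNIV] by simp
  qed
  from has_derivative_Pair[OF has_derivative_fst[OF has_derivative_ident] has_derivative_add_const[OF this]]
  show ?thesis by simp
qed

lemma has_derivative_polar_lift:
  assumes T: "T > 0" and g: "g \<in> periodic_smooth T" and x: "x \<in> vdom T"
  shows "(polar_lift g has_derivative polar_lift_deriv T g x) (at x within vdom T)"
proof -
  obtain t z where xz: "x = (t, z)" by (cases x)
  have t: "t \<in> {0..T}" and z: "z \<noteq> 0" using x by (auto simp: xz vdom_def)
  obtain s c where s: "s \<noteq> 0" "s * z \<notin> \<real>\<^sub>\<le>\<^sub>0" "Arg z = Im (Ln (s * z)) + c"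
    and branch: "\<And>w. w \<noteq> 0 \<Longrightarrow> Im (Ln (s * w)) + c = Arg w \<or> Im (Ln (s * w)) + c = Arg w + 2 * pi"
    using Arg_branch[OF z] by blast
  define \<phi> where "\<phi> y = (fst y, Im (Ln (s * snd y)) + c)" for y :: "real \<times> complex"
  let ?G = "\<lambda>h. fst h * partial_t T g (t, Arg z) + snd h * partial_theta T g (t, Arg z)"
  have "(\<phi> has_derivative (\<lambda>h. (fst h, Im (snd h / z)))) (at (t, z) within vdom T)"
    unfolding \<phi>_def by (rule has_derivative_branch_coordinates[OF s(1,2)])
  moreover have "(g has_derivative ?G) (at (\<phi> (t, z)) within \<phi> ` vdom T)"
  proof (rule has_derivative_subset)
    show "\<phi> ` vdom T \<subseteq> udom T" by (auto simp: \<phi>_def vdom_def udom_def)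
    show "(g has_derivative ?G) (at (\<phi> (t, z)) within udom T)"
      using has_derivative_udom[OF T periodic_smoothD(1)[OF g]] t s(3) by (simp add: \<phi>_def udom_def)
  qed
  ultimately have "((g \<circ> \<phi>) has_derivative ?G \<circ> (\<lambda>h. (fst h, Im (snd h / z)))) (at (t, z) within vdom T)"
    by (rule diff_chain_within)
  then have "(polar_lift g has_derivative ?G \<circ> (\<lambda>h. (fst h, Im (snd h / z)))) (at (t, z) within vdom T)"
  proof (rule has_derivative_transform_within[OF _ zero_less_one])
    show "(t, z) \<in> vdom T" using x xz by simp
    show "(g \<circ> \<phi>) y = polar_lift g y" if "y \<in> vdom T" "dist y (t, z) < 1" for y
    proof -
      have "fst y \<in> {0..T}" "snd y \<noteq> 0" using that(1) by (auto simp: vdom_def)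
      then show ?thesis using branch[of "snd y"] periodic_smoothD(2)[OF g, of "fst y" "Arg (snd y)"]
        by (auto simp: \<phi>_def polar_lift_def)
    qed
  qed
  then show ?thesis by (simp add: xz o_def polar_lift_def polar_lift_deriv_def[abs_def])
qed

lemma smooth_on_inverse_norm_snd_square:
  fixes S :: "('a::euclidean_space \<times> 'b::euclidean_space) set"
  assumes S: "\<And>x. x \<in> S \<Longrightarrow> snd x \<noteq> 0"
  shows "smooth_on S (\<lambda>x. 1 / (norm (snd x))\<^sup>2)"
proof -
  let ?Q = "\<lambda>x::'a \<times> 'b. inverse (snd x \<bullet> snd x)"
  let ?A = "fun_algebra ({?Q} \<union> {g. smooth_on S g})"
  have "partials_in S ?A ?Q"
  proof (rule partials_inI)
    show "(?Q has_derivative (\<lambda>h. - (?Q x * ?Q x) * (2 * (snd x \<bullet> snd h)))) (at x within S)"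
      if "x \<in> S" for x
      using S[OF that] by (auto intro!: derivative_eq_intros simp: fun_eq_iff inner_commute algebra_simps)
    fix b :: "'a \<times> 'b"
    have Q: "?Q \<in> ?A" by (intro fun_algebra.generator) simp
    have inner: "(\<lambda>x. snd x \<bullet> snd b) \<in> ?A"
      by (intro fun_algebra.generator UnI2 CollectI smooth_on_bounded_linear bounded_linear_inner_left_comp
          bounded_linear_snd)
    have "(\<lambda>x. (-1 * (?Q x * ?Q x)) * (2 * (snd x \<bullet> snd b))) \<in> ?A"
      by (intro fun_algebra.mult fun_algebra.const Q inner)
    then show "\<exists>g\<in>?A. \<forall>x\<in>S. - (?Q x * ?Q x) * (2 * (snd x \<bullet> snd b)) = g x"
      by (intro bexI) auto
  qed
  then have "smooth_on S ?Q" by (intro smooth_on_generated[of "{?Q}"]) auto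
  then show ?thesis by (rule smooth_on_cong) (simp add: power2_norm_eq_inner divide_inverse)
qed

lemma smooth_on_polar_lift:
  assumes T: "T > 0" and g: "g \<in> periodic_smooth T"
  shows "smooth_on (vdom T) (polar_lift g)"
proof -
  let ?G = "polar_lift ` periodic_smooth T"
  let ?A = "fun_algebra (?G \<union> {f. smooth_on (vdom T) f})"
  have lift: "polar_lift f \<in> ?A" if "f \<in> periodic_smooth T" for f
    using that by (intro fun_algebra.generator) simp
  have smooth: "f \<in> ?A" if "smooth_on (vdom T) f" for f
    using that by (intro fun_algebra.generator) simp
  have "partials_in (vdom T) ?A (polar_lift f)" if f: "f \<in> periodic_smooth T" for f
  proof (rule partials_inI)
    show "(polar_lift f has_derivative polar_lift_deriv T f x) (at x within vdom T)"
      if "x \<in> vdom T" for x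
      by (rule has_derivative_polar_lift[OF T f that])
    fix b :: "real \<times> complex"
    have "(\<lambda>x. fst b * polar_lift (partial_t T f) x
        + ((Im (snd b) * Re (snd x) + - Re (snd b) * Im (snd x)) * (1 / (norm (snd x))\<^sup>2))
          * polar_lift (partial_theta T f) x) \<in> ?A"
      using T f
      by (intro fun_algebra.add fun_algebra.mult fun_algebra.const lift smooth
          periodic_smooth_partial_t periodic_smooth_partial_theta smooth_on_inverse_norm_snd_square
          smooth_on_bounded_linear bounded_linear_compose[OF bounded_linear_Re bounded_linear_snd]
          bounded_linear_compose[OF bounded_linear_Im bounded_linear_snd])
         (auto simp: vdom_def)
    moreover have "Im (snd b / snd x)
        = (Im (snd b) * Re (snd x) + - Re (snd b) * Im (snd x)) * (1 / (norm (snd x))\<^sup>2)" for x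
      by (simp add: Im_divide')
    ultimately show "\<exists>h\<in>?A. \<forall>x\<in>vdom T. polar_lift_deriv T f x b = h x"
      by (intro bexI) (auto simp: polar_lift_deriv_def)
  qed
  then show ?thesis using g by (intro smooth_on_generated[of ?G]) auto
qed

section \<open>Polar vector fields\<close>

text \<open>The field \<open>a \<partial>\<^sub>\<theta> + b r \<partial>\<^sub>r\<close>: at \<open>z = r e\<^sup>i\<^sup>\<theta>\<close> one has \<open>\<partial>\<^sub>\<theta> = \<i> z\<close> and \<open>r \<partial>\<^sub>r = z\<close>.\<close>
definition polar_field :: "(real \<times> real \<Rightarrow> real) \<Rightarrow> (real \<times> real \<Rightarrow> real) \<Rightarrow> real \<times> complex \<Rightarrow> complex" where
  "polar_field a b x = (\<i> * of_real (polar_lift a x) + of_real (polar_lift b x)) * snd x"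

lemma has_derivative_polar_field:
  assumes T: "T > 0" and a: "a \<in> periodic_smooth T" and b: "b \<in> periodic_smooth T" and x: "x \<in> vdom T"
  shows "(polar_field a b has_derivative (\<lambda>h.
      (\<i> * of_real (polar_lift_deriv T a x h) + of_real (polar_lift_deriv T b x h)) * snd x
      + (\<i> * of_real (polar_lift a x) + of_real (polar_lift b x)) * snd h)) (at x within vdom T)"
  unfolding polar_field_def[abs_def]
  by (auto intro!: derivative_eq_intros has_derivative_polar_lift[OF T a x] has_derivative_polar_lift[OF T b x]
      simp: fun_eq_iff algebra_simps)

lemma polar_field_material_derivative:
  assumes T: "T > 0" and a: "a \<in> periodic_smooth T" and b: "b \<in> periodic_smooth T" and x: "x \<in> vdom T"
  defines "A \<equiv> polar_lift a x" and "B \<equiv> polar_lift b x"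
  shows "dd (vdom T) (1, 0) (polar_field a b) x + dd (vdom T) (0, polar_field a b x) (polar_field a b) x
    = snd x * (\<i> * of_real (polar_lift (partial_t T a) x + A * polar_lift (partial_theta T a) x + 2 * A * B)
        + of_real (polar_lift (partial_t T b) x + A * polar_lift (partial_theta T b) x + B\<^sup>2 - A\<^sup>2))"
proof -
  let ?V = "\<i> * of_real A + of_real B"
  have z: "snd x \<noteq> 0" using x by (auto simp: vdom_def)
  have V: "polar_field a b x = ?V * snd x" by (simp add: polar_field_def A_def B_def)
  have dd: "dd (vdom T) h (polar_field a b) x =
      (\<i> * of_real (polar_lift_deriv T a x h) + of_real (polar_lift_deriv T b x h)) * snd x + ?V * snd h" for h
    using dd_vdom[OF has_derivative_polar_field[OF T a b x] T x] by (simp add: A_def B_def)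
  have "Im (polar_field a b x / snd x) = A" using z by (simp add: V)
  then have "dd (vdom T) (0, polar_field a b x) (polar_field a b) x =
      (\<i> * of_real (A * polar_lift (partial_theta T a) x) + of_real (A * polar_lift (partial_theta T b) x)) * snd x
      + ?V * (?V * snd x)"
    by (simp add: dd polar_lift_deriv_def V)
  moreover have "dd (vdom T) (1, 0) (polar_field a b) x =
      (\<i> * of_real (polar_lift (partial_t T a) x) + of_real (polar_lift (partial_t T b) x)) * snd x"
    by (simp add: dd polar_lift_deriv_def)
  ultimately show ?thesis by (simp add: complex_eq_iff algebra_simps power2_eq_square)
qed

lemma Im_divide_inner: "Im (h / z) = (\<i> * z) \<bullet> h / (cmod z)\<^sup>2"
  by (simp add: Im_divide' inner_complex_def algebra_simps)

lemma grad_x_radial_pressure: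
  assumes T: "T > 0" and p: "p \<in> periodic_smooth T" and x: "x \<in> vdom T"
  shows "grad_x T (\<lambda>x. 1/2 * (cmod (snd x))\<^sup>2 * polar_lift p x) x
    = snd x * (of_real (polar_lift p x) + \<i> * of_real (polar_lift (partial_theta T p) x / 2))"
proof -
  let ?z = "snd x" and ?L = "polar_lift p x" and ?L\<theta> = "polar_lift (partial_theta T p) x"
  have z: "?z \<noteq> 0" using x by (auto simp: vdom_def)
  have D: "((\<lambda>x. 1/2 * (snd x \<bullet> snd x) * polar_lift p x) has_derivative
      (\<lambda>h. 1/2 * (snd h \<bullet> ?z + ?z \<bullet> snd h) * ?L + 1/2 * (?z \<bullet> ?z) * polar_lift_deriv T p x h))
      (at x within vdom T)"
    by (auto intro!: derivative_eq_intros has_derivative_polar_lift[OF T p x] simp: fun_eq_iff algebra_simps)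
  have E: "(\<lambda>x. 1/2 * (cmod (snd x))\<^sup>2 * polar_lift p x) = (\<lambda>x. 1/2 * (snd x \<bullet> snd x) * polar_lift p x)"
    by (simp add: power2_norm_eq_inner)
  have "dd (vdom T) (0, b) (\<lambda>x. 1/2 * (cmod (snd x))\<^sup>2 * polar_lift p x) x
      = 1/2 * (b \<bullet> ?z + ?z \<bullet> b) * ?L + 1/2 * (?z \<bullet> ?z) * polar_lift_deriv T p x (0, b)" for b
    unfolding E using dd_vdom[OF D T x] by simp
  also have "\<dots> b = ?L * (?z \<bullet> b) + ?L\<theta> / 2 * ((\<i> * ?z) \<bullet> b)" for b
    using z by (simp add: polar_lift_deriv_def Im_divide_inner inner_commute power2_norm_eq_inner[symmetric])
  finally have dd: "dd (vdom T) (0, b) (\<lambda>x. 1/2 * (cmod (snd x))\<^sup>2 * polar_lift p x) x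
      = ?L * (?z \<bullet> b) + ?L\<theta> / 2 * ((\<i> * ?z) \<bullet> b)" for b .
  have "grad_x T (\<lambda>x. 1/2 * (cmod (snd x))\<^sup>2 * polar_lift p x) x
      = ?L *\<^sub>R (\<Sum>b\<in>Basis. (?z \<bullet> b) *\<^sub>R b) + (?L\<theta> / 2) *\<^sub>R (\<Sum>b\<in>Basis. ((\<i> * ?z) \<bullet> b) *\<^sub>R b)"
    by (simp only: grad_x_def dd scaleR_add_left sum.distrib scaleR_sum_right scaleR_scaleR)
  also have "\<dots> = ?L *\<^sub>R ?z + (?L\<theta> / 2) *\<^sub>R (\<i> * ?z)"
    by (simp only: euclidean_representation)
  finally show ?thesis by (simp add: scaleR_conv_of_real algebra_simps)
qed

lemma div_x_weighted_polar_field: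
  assumes T: "T > 0" and a: "a \<in> periodic_smooth T" and b: "b \<in> periodic_smooth T" and x: "x \<in> vdom T"
  shows "div_x T (\<lambda>x. of_real (1 / (cmod (snd x))^4) * polar_field a b x) x
    = (polar_lift (partial_theta T a) x - 2 * polar_lift b x) / (cmod (snd x))^4"
proof -
  let ?z = "snd x" and ?V = "polar_field a b x" and ?B = "polar_lift b x"
  let ?a\<theta> = "polar_lift (partial_theta T a) x"
  let ?DV = "\<lambda>h. (\<i> * of_real (polar_lift_deriv T a x h) + of_real (polar_lift_deriv T b x h)) * ?z
    + (\<i> * of_real (polar_lift a x) + of_real ?B) * snd h"
  let ?W = "\<lambda>x. of_real (1 / (cmod (snd x))^4) * polar_field a b x"
  define r2 where "r2 = (cmod ?z)\<^sup>2"
  have z: "?z \<noteq> 0" using x by (auto simp: vdom_def)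
  have r2: "r2 \<noteq> 0" "?z \<bullet> ?z = r2" "(cmod ?z)^4 = r2\<^sup>2"
    using z by (simp_all add: r2_def power2_norm_eq_inner[symmetric] flip: power_mult)
  have re_im: "(Re ?z)\<^sup>2 + (Im ?z)\<^sup>2 = r2" by (simp add: r2_def cmod_power2)
  have Im_inverse: "Im (1 / ?z) = - Im ?z / r2" "Im (\<i> / ?z) = Re ?z / r2"
    by (simp_all add: Im_divide' r2_def)
  have "((\<lambda>x. of_real (inverse ((snd x \<bullet> snd x)\<^sup>2)) * polar_field a b x) has_derivative
      (\<lambda>h. of_real (- 4 * (?z \<bullet> snd h) / r2 ^ 3) * ?V + of_real (1 / r2\<^sup>2) * ?DV h)) (at x within vdom T)"
    using z r2
    by (auto intro!: derivative_eq_intros has_derivative_polar_field[OF T a b x]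
        simp: fun_eq_iff inner_commute power2_eq_square power3_eq_cube field_simps)
  moreover have "?W = (\<lambda>x. of_real (inverse ((snd x \<bullet> snd x)\<^sup>2)) * polar_field a b x)"
    by (simp add: power2_norm_eq_inner[symmetric] divide_inverse flip: power_mult)
  ultimately have dd: "dd (vdom T) h ?W x = of_real (- 4 * (?z \<bullet> snd h) / r2 ^ 3) * ?V + of_real (1 / r2\<^sup>2) * ?DV h"
    for h using dd_vdom[OF _ T x] by simp
  have trace_DV: "Re (?DV (0, 1)) + Im (?DV (0, \<i>)) = ?a\<theta> + 2 * ?B"
    using r2(1) by (simp add: Im_inverse polar_lift_deriv_def field_simps)
      (simp add: re_im[symmetric] algebra_simps power2_eq_square power4_eq_xxxx)
  have radial_V: "Re ?z * Re ?V + Im ?z * Im ?V = ?B * r2"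
    by (simp add: polar_field_def re_im[symmetric] algebra_simps power2_eq_square)
  have "div_x T ?W x = dd (vdom T) (0, 1) ?W x \<bullet> 1 + dd (vdom T) (0, \<i>) ?W x \<bullet> \<i>"
    by (simp add: div_x_def Basis_complex_def)
  also have "\<dots> = (Re (?DV (0, 1)) + Im (?DV (0, \<i>))) / r2\<^sup>2 - 4 * (Re ?z * Re ?V + Im ?z * Im ?V) / r2 ^ 3"
    unfolding dd by (simp add: inner_complex_def add_divide_distrib diff_divide_distrib algebra_simps)
  also have "\<dots> = (?a\<theta> + 2 * ?B) / r2\<^sup>2 - 4 * (?B * r2) / r2 ^ 3"
    by (simp only: trace_DV radial_V)
  also have "\<dots> = (?a\<theta> - 2 * ?B) / (cmod ?z)^4"
    using r2(1) by (simp add: r2(3) field_simps power2_eq_square power3_eq_cube)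
  finally show ?thesis .
qed

lemma smooth_on_radial_pressure:
  assumes T: "T > 0" and p: "p \<in> periodic_smooth T"
  shows "smooth_on (vdom T) (\<lambda>x. 1/2 * (cmod (snd x))\<^sup>2 * polar_lift p x)"
proof -
  have re: "smooth_on (vdom T) (\<lambda>x. Re (snd x))" and im: "smooth_on (vdom T) (\<lambda>x. Im (snd x))"
    by (simp_all add: smooth_on_bounded_linear bounded_linear_compose[OF bounded_linear_Re bounded_linear_snd]
        bounded_linear_compose[OF bounded_linear_Im bounded_linear_snd])
  have "smooth_on (vdom T) (\<lambda>x. 1/2 * (Re (snd x) * Re (snd x) + Im (snd x) * Im (snd x)) * polar_lift p x)"
    by (intro smooth_on_mult smooth_on_add smooth_on_const re im smooth_on_polar_lift[OF T p])
  then show ?thesis by (rule smooth_on_cong) (simp add: cmod_power2 flip: power2_eq_square)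
qed

lemma smooth_on_polar_field_inner:
  assumes T: "T > 0" and a: "a \<in> periodic_smooth T" and b: "b \<in> periodic_smooth T"
  shows "smooth_on (vdom T) (\<lambda>x. polar_field a b x \<bullet> c)"
proof -
  have "bounded_linear (\<lambda>x::real \<times> complex. \<i> * snd x)"
    by (rule bounded_linear_compose[OF bounded_linear_mult_right bounded_linear_snd])
  then have "bounded_linear (\<lambda>x::real \<times> complex. (\<i> * snd x) \<bullet> c)" "bounded_linear (\<lambda>x::real \<times> complex. snd x \<bullet> c)"
    by (simp_all add: bounded_linear_inner_left_comp bounded_linear_snd)
  then have "smooth_on (vdom T) (\<lambda>x. polar_lift a x * ((\<i> * snd x) \<bullet> c) + polar_lift b x * (snd x \<bullet> c))"
    by (intro smooth_on_add smooth_on_mult smooth_on_polar_lift[OF T a] smooth_on_polar_lift[OF T b]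
        smooth_on_bounded_linear)
  then show ?thesis
    by (rule smooth_on_cong) (simp add: polar_field_def inner_complex_def algebra_simps)
qed

definition polar_pressure :: "real \<Rightarrow> (real \<times> real \<Rightarrow> real) \<Rightarrow> (real \<times> real \<Rightarrow> real) \<Rightarrow> real \<times> real \<Rightarrow> real" where
  "polar_pressure T a b y = (a y)\<^sup>2 - partial_t T b y - a y * partial_theta T b y - (b y)\<^sup>2"

lemma periodic_smooth_polar_pressure:
  assumes T: "T > 0" and a: "a \<in> periodic_smooth T" and b: "b \<in> periodic_smooth T"
  shows "polar_pressure T a b \<in> periodic_smooth T"
proof -
  have "(\<lambda>y. a y * a y + (-1) * partial_t T b y + (-1) * (a y * partial_theta T b y) + (-1) * (b y * b y))
      \<in> periodic_smooth T"
    using T a b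
    by (intro periodic_smooth_add periodic_smooth_mult periodic_smooth_const periodic_smooth_partial_t
        periodic_smooth_partial_theta)
  moreover have "polar_pressure T a b = (\<lambda>y. a y * a y + (-1) * partial_t T b y
      + (-1) * (a y * partial_theta T b y) + (-1) * (b y * b y))"
    by (simp add: fun_eq_iff polar_pressure_def power2_eq_square)
  ultimately show ?thesis by simp
qed

lemma partial_theta_polar_pressure:
  assumes T: "T > 0" and a: "smooth_on (udom T) a" and b: "smooth_on (udom T) b" and y: "y \<in> udom T"
  shows "partial_theta T (polar_pressure T a b) y
    = 2 * a y * partial_theta T a y - partial_theta T (partial_t T b) y
      - (partial_theta T a y * partial_theta T b y + a y * partial_theta T (partial_theta T b) y)
      - 2 * b y * partial_theta T b y"
proof -
  have "(polar_pressure T a b has_derivative (\<lambda>h.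
      2 * a y * (fst h * partial_t T a y + snd h * partial_theta T a y)
      - (fst h * partial_t T (partial_t T b) y + snd h * partial_theta T (partial_t T b) y)
      - ((fst h * partial_t T a y + snd h * partial_theta T a y) * partial_theta T b y
        + a y * (fst h * partial_t T (partial_theta T b) y + snd h * partial_theta T (partial_theta T b) y))
      - 2 * b y * (fst h * partial_t T b y + snd h * partial_theta T b y))) (at y within udom T)"
    unfolding polar_pressure_def[abs_def]
    by (auto intro!: derivative_eq_intros has_derivative_udom[OF T a y] has_derivative_udom[OF T b y]
        has_derivative_udom[OF T smooth_on_partial_t[OF T b] y]
        has_derivative_udom[OF T smooth_on_partial_theta[OF T b] y]
        simp: fun_eq_iff power2_eq_square algebra_simps)
  from dd_udom[OF this T y, of "(0, 1)"] show ?thesis by simp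
qed

text \<open>The radial component of Euler's equation determines the pressure; the angular component
  is the hypothesis \<open>compatible\<close>.\<close>
lemma polar_field_euler:
  assumes T: "T > 0" and a: "a \<in> periodic_smooth T" and b: "b \<in> periodic_smooth T" and x: "x \<in> vdom T"
    and compatible: "\<And>y. y \<in> udom T \<Longrightarrow>
      partial_theta T (polar_pressure T a b) y = - 2 * (partial_t T a y + a y * partial_theta T a y + 2 * a y * b y)"
  shows "dd (vdom T) (1, 0) (polar_field a b) x + dd (vdom T) (0, polar_field a b x) (polar_field a b) x
    = - grad_x T (\<lambda>x. 1/2 * (cmod (snd x))\<^sup>2 * polar_lift (polar_pressure T a b) x) x"
proof -
  have y: "(fst x, Arg (snd x)) \<in> udom T" using x by (auto simp: vdom_def udom_def)
  show ?thesis
    unfolding polar_field_material_derivative[OF T a b x]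
      grad_x_radial_pressure[OF T periodic_smooth_polar_pressure[OF T a b] x]
    by (simp add: polar_lift_def compatible[OF y] polar_pressure_def complex_eq_iff field_simps)
qed

section \<open>The Camassa-Holm field\<close>

lemma camassa_holm_compatibility:
  fixes U :: "real \<times> real \<Rightarrow> real" and T :: real
  defines "b \<equiv> \<lambda>y. partial_theta T U y / 2"
  assumes T: "T > 0" and U: "U \<in> periodic_smooth T" and y: "y \<in> udom T"
    and CH: "partial_t T U y - 1/4 * partial_t T (partial_theta T (partial_theta T U)) y
      + 3 * partial_theta T U y * U y
      - 1/2 * partial_theta T (partial_theta T U) y * partial_theta T U y
      - 1/4 * partial_theta T (partial_theta T (partial_theta T U)) y * U y = 0"
  shows "partial_theta T (polar_pressure T U b) y
    = - 2 * (partial_t T U y + U y * partial_theta T U y + 2 * U y * b y)"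
proof -
  let ?U\<theta> = "partial_theta T U" let ?U\<theta>\<theta> = "partial_theta T ?U\<theta>"
  have sU: "smooth_on (udom T) U" using U by (rule periodic_smoothD)
  have sU\<theta>: "smooth_on (udom T) ?U\<theta>" and sU\<theta>\<theta>: "smooth_on (udom T) ?U\<theta>\<theta>"
    using T sU by (simp_all add: smooth_on_partial_theta)
  have sb: "smooth_on (udom T) b"
    unfolding b_def using smooth_on_mult[OF sU\<theta> smooth_on_const[of _ "1/2"]] by simp
  have b\<theta>: "partial_theta T b z = ?U\<theta>\<theta> z / 2" if "z \<in> udom T" for z
    unfolding b_def by (rule dd_udom_divide_const[OF T sU\<theta> that])
  have "partial_theta T (partial_t T b) y = partial_t T (partial_theta T b) y"
    by (rule partial_t_partial_theta_commute[OF T sb y])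
  also have "\<dots> = partial_t T (\<lambda>z. ?U\<theta>\<theta> z / 2) y" by (rule dd_cong[OF b\<theta> y])
  also have "\<dots> = partial_t T ?U\<theta>\<theta> y / 2" by (rule dd_udom_divide_const[OF T sU\<theta>\<theta> y])
  finally have bt\<theta>: "partial_theta T (partial_t T b) y = partial_t T ?U\<theta>\<theta> y / 2" .
  have "partial_theta T (partial_theta T b) y = partial_theta T (\<lambda>z. ?U\<theta>\<theta> z / 2) y"
    by (rule dd_cong[OF b\<theta> y])
  also have "\<dots> = partial_theta T ?U\<theta>\<theta> y / 2" by (rule dd_udom_divide_const[OF T sU\<theta>\<theta> y])
  finally have b\<theta>\<theta>: "partial_theta T (partial_theta T b) y = partial_theta T ?U\<theta>\<theta> y / 2" .
  have b_y: "b y = ?U\<theta> y / 2" by (simp add: b_def)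
  have "partial_t T ?U\<theta>\<theta> y = 4 * partial_t T U y + 12 * ?U\<theta> y * U y
      - 2 * ?U\<theta>\<theta> y * ?U\<theta> y - partial_theta T ?U\<theta>\<theta> y * U y"
    using CH by linarith
  then show ?thesis
    unfolding partial_theta_polar_pressure[OF T sU sb y] bt\<theta> b\<theta>\<theta> b\<theta>[OF y] b_y
    by (simp add: algebra_simps)
qed

lemma vfield_eq_polar_field:
  assumes "x \<in> vdom T"
  shows "vfield T u x = polar_field (\<lambda>(t, \<theta>). u t \<theta>) (\<lambda>y. partial_theta T (\<lambda>(t, \<theta>). u t \<theta>) y / 2) x"
proof -
  obtain t z where x: "x = (t, z)" by (cases x)
  have "z \<noteq> 0" using assms by (auto simp: x vdom_def)
  then have "of_real (cmod z / 2 * w) * (z / of_real (cmod z)) = of_real (w / 2) * z" for w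
    by (simp add: field_simps)
  then show ?thesis by (simp add: x vfield_def polar_field_def polar_lift_def Let_def algebra_simps)
qed

theorem mainTheorem1:
  fixes u :: "real \<Rightarrow> real \<Rightarrow> real" and T :: real
  assumes T_pos: "T > 0"
    and periodic: "\<forall>t\<in>{0..T}. \<forall>\<theta>. u t (\<theta> + 2 * pi) = u t \<theta>"
    and smooth: "smooth_on (udom T) (\<lambda>(t, \<theta>). u t \<theta>)"
    and CH: "\<forall>t\<in>{0..T}. \<forall>\<theta>.
      (let U = (\<lambda>(s, \<phi>). u s \<phi>); D = udom T; et = (1, 0); e\<theta> = (0, 1) in
         dd D et U (t, \<theta>)
       - 1/4 * dd D et (dd D e\<theta> (dd D e\<theta> U)) (t, \<theta>)
       + 3 * dd D e\<theta> U (t, \<theta>) * u t \<theta>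
       - 1/2 * dd D e\<theta> (dd D e\<theta> U) (t, \<theta>) * dd D e\<theta> U (t, \<theta>)
       - 1/4 * dd D e\<theta> (dd D e\<theta> (dd D e\<theta> U)) (t, \<theta>) * u t \<theta>) = 0"
  shows "\<exists>P p.
      smooth_on (udom T) (\<lambda>(t, \<theta>). p t \<theta>)
    \<and> (\<forall>t\<in>{0..T}. \<forall>\<theta>. p t (\<theta> + 2 * pi) = p t \<theta>)
    \<and> smooth_on (vdom T) P
    \<and> (\<forall>(t, z)\<in>vdom T. P (t, z) = 1/2 * (cmod z)\<^sup>2 * p t (Arg z))
    \<and> (\<forall>b\<in>Basis. smooth_on (vdom T) (\<lambda>x. vfield T u x \<bullet> b))
    \<and> (\<forall>x\<in>vdom T.
         dd (vdom T) (1, 0) (vfield T u) x + dd (vdom T) (0, vfield T u x) (vfield T u) x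
           = - grad_x T P x)
    \<and> (\<forall>x\<in>vdom T.
         div_x T (\<lambda>(t, z). of_real (1 / (cmod z) ^ 4) * vfield T u (t, z)) x = 0)"
proof -
  define U where "U = (\<lambda>(t, \<theta>). u t \<theta>)"
  define b where "b = (\<lambda>y. partial_theta T U y / 2)"
  let ?p = "polar_pressure T U b" and ?W = "\<lambda>x. of_real (1 / (cmod (snd x)) ^ 4) * polar_field U b x"
  have U: "U \<in> periodic_smooth T" using smooth periodic by (simp add: periodic_smooth_def U_def)
  have b: "b \<in> periodic_smooth T"
    using periodic_smooth_mult[OF periodic_smooth_partial_theta[OF T_pos U] periodic_smooth_const[of "1/2"]]
    by (simp add: b_def)
  have p: "?p \<in> periodic_smooth T" by (rule periodic_smooth_polar_pressure[OF T_pos U b])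
  have v: "vfield T u x = polar_field U b x" if "x \<in> vdom T" for x
    using vfield_eq_polar_field[OF that] by (simp add: U_def b_def)
  have compatible: "partial_theta T ?p y = - 2 * (partial_t T U y + U y * partial_theta T U y + 2 * U y * b y)"
    if y: "y \<in> udom T" for y
    unfolding b_def using y CH by (intro camassa_holm_compatibility[OF T_pos U y]) (auto simp: U_def Let_def udom_def)
  have euler: "dd (vdom T) (1, 0) (vfield T u) x + dd (vdom T) (0, vfield T u x) (vfield T u) x
      = - grad_x T (\<lambda>x. 1/2 * (cmod (snd x))\<^sup>2 * polar_lift ?p x) x" if x: "x \<in> vdom T" for x
    using polar_field_euler[OF T_pos U b x compatible] by (simp add: dd_cong[OF v x] v[OF x])
  have div: "div_x T (\<lambda>(t, z). of_real (1 / (cmod z) ^ 4) * vfield T u (t, z)) x = 0" if x: "x \<in> vdom T" for x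
  proof -
    have "div_x T (\<lambda>(t, z). of_real (1 / (cmod z) ^ 4) * vfield T u (t, z)) x = div_x T ?W x"
      by (rule div_x_cong[OF _ x]) (auto simp: v)
    then show ?thesis unfolding div_x_weighted_polar_field[OF T_pos U b x] by (simp add: polar_lift_def b_def)
  qed
  have components: "smooth_on (vdom T) (\<lambda>x. vfield T u x \<bullet> c)" for c
    by (rule smooth_on_cong[OF smooth_on_polar_field_inner[OF T_pos U b]]) (simp add: v)
  show ?thesis
    using periodic_smoothD[OF p] smooth_on_radial_pressure[OF T_pos p] components euler div
    by (intro exI[of _ "\<lambda>x. 1/2 * (cmod (snd x))\<^sup>2 * polar_lift ?p x"] exI[of _ "\<lambda>t \<theta>. ?p (t, \<theta>)"])
      (auto simp: polar_lift_def)
qed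

end
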